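(* Let $f$ be an orientation-preserving homeomorphism of the circle $\mathbb T=\mathbb R/\mathbb Z$ whose rotation number $\rho(f)$ is rational. Assume $f$ is not topologically conjugate to a rotation. Then ${\rm h_{pol}}(f)=1$.
   Context: The rotation number of $f$ is the class in $\mathbb T$ of $\lim_{n\to\infty}F^n(x)/n$ for a lift $F:\mathbb R\to\mathbb R$ of $f$ (independent of $x$). Polynomial entropy: with $d_n^f(x,y)=\max_{0\le k\le n-1}d(f^k(x),f^k(y))$ for the standard metric $d$ on $\mathbb T$ and $G_n^f(\varepsilon)$ the minimal number of $d_n^f$-balls of radius $\varepsilon$ covering $\mathbb T$, ${\rm h_{pol}}(f)=\lim_{\varepsilon\to0}\limsup_{n\to\infty}\frac{\log G_n^f(\varepsilon)}{\log n}$. *)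

theory Defs
  imports "HOL-Analysis.Analysis"
begin

text \<open>The circle T = R/Z is represented by the fundamental domain {0..<1}; a real number
  represents its class, and the projection to the fundamental domain is frac.\<close>

definition circle :: "real set" where
  "circle = {0..<1}"

definition circ_dist :: "real \<Rightarrow> real \<Rightarrow> real" where
  "circ_dist x y = \<bar>x - y - of_int (round (x - y))\<bar>"

text \<open>Lifts of orientation-preserving homeomorphisms of T: continuous strictly increasing
  maps R \<rightarrow> R commuting with the unit translation.\<close>
definition circle_lift :: "(real \<Rightarrow> real) \<Rightarrow> bool" where
  "circle_lift F \<longleftrightarrow> continuous_on UNIV F \<and> strict_mono F \<and> (\<forall>x. F (x + 1) = F x + 1)"

definition circ_map :: "(real \<Rightarrow> real) \<Rightarrow> real \<Rightarrow> real" where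
  "circ_map F x = frac (F x)"

text \<open>Rotation number (as real number; its class in T is the rotation number of f).\<close>
definition rot_num :: "(real \<Rightarrow> real) \<Rightarrow> real" where
  "rot_num F = lim (\<lambda>n. (F ^^ n) 0 / real n)"

definition rotation :: "real \<Rightarrow> real \<Rightarrow> real" where
  "rotation a x = frac (x + a)"

definition circ_continuous :: "(real \<Rightarrow> real) \<Rightarrow> bool" where
  "circ_continuous h \<longleftrightarrow> (\<forall>x\<in>circle. \<forall>e>0. \<exists>d>0. \<forall>y\<in>circle.
       circ_dist x y < d \<longrightarrow> circ_dist (h x) (h y) < e)"

definition circ_homeomorphism :: "(real \<Rightarrow> real) \<Rightarrow> (real \<Rightarrow> real) \<Rightarrow> bool" where
  "circ_homeomorphism h g \<longleftrightarrow>
     h ` circle \<subseteq> circle \<and> g ` circle \<subseteq> circle \<and>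
     (\<forall>x\<in>circle. g (h x) = x) \<and> (\<forall>y\<in>circle. h (g y) = y) \<and>
     circ_continuous h \<and> circ_continuous g"

definition conj_to_rotation :: "(real \<Rightarrow> real) \<Rightarrow> bool" where
  "conj_to_rotation F \<longleftrightarrow> (\<exists>h g a. circ_homeomorphism h g \<and>
      (\<forall>x\<in>circle. h (circ_map F x) = rotation a (h x)))"

definition bowen_dist :: "(real \<Rightarrow> real) \<Rightarrow> nat \<Rightarrow> real \<Rightarrow> real \<Rightarrow> real" where
  "bowen_dist F n x y = Max {circ_dist ((circ_map F ^^ k) x) ((circ_map F ^^ k) y) | k. k < n}"

definition cover_num :: "(real \<Rightarrow> real) \<Rightarrow> nat \<Rightarrow> real \<Rightarrow> nat" where
  "cover_num F n eps = Inf {card C | C. finite C \<and> C \<subseteq> circle \<and>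
      (\<forall>x\<in>circle. \<exists>c\<in>C. bowen_dist F n x c < eps)}"

definition hpol_eps :: "(real \<Rightarrow> real) \<Rightarrow> real \<Rightarrow> ereal" where
  "hpol_eps F eps = limsup (\<lambda>n. ereal (ln (real (cover_num F n eps)) / ln (real n)))"

end

theory Submission
  imports Defs
begin

text \<open>Let \<open>p / q\<close> be the rotation number and \<open>G = F\<^sup>q - p\<close>. The orbits of \<open>G\<close> are bounded,
  so \<open>G\<close> has a fixed point \<open>a\<close>. As \<open>f\<close> is not conjugate to a rotation, \<open>G\<close> is not the identity
  (otherwise the average of \<open>F\<^sup>k\<close> over \<open>k < q\<close> would conjugate \<open>F\<close> to the translation by
  \<open>p / q\<close>), so some \<open>c\<close> between \<open>a\<close> and \<open>a + 1\<close> is moved by \<open>G\<close>, say upwards. The points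
  \<open>u\<^sub>i\<close> with \<open>G\<^sup>i u\<^sub>i = c\<close> stay a fixed distance \<open>\<sigma>\<close> apart at time \<open>i\<close>, so for \<open>2 \<epsilon> \<le> \<sigma>\<close>
  about \<open>n / q\<close> balls are needed to cover the circle in the metric \<open>d\<^sub>n\<close>. Conversely, cutting
  the circle at the points whose first \<open>n\<close> images lie on the grid \<open>\<int> / N\<close>, \<open>N > 1 / \<epsilon>\<close>,
  gives at most \<open>n N + 1\<close> arcs of \<open>d\<^sub>n\<close>-diameter less than \<open>\<epsilon>\<close>. So \<open>G\<^sub>n(\<epsilon>)\<close> grows linearly
  in \<open>n\<close> for all small \<open>\<epsilon>\<close>, and \<open>log G\<^sub>n(\<epsilon>) / log n \<rightarrow> 1\<close>.\<close>

subsection \<open>Lifts of circle homeomorphisms\<close>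

lemma unit_periodic_add_of_int:
  fixes K :: "real \<Rightarrow> real"
  assumes "\<And>x. K (x + 1) = K x + 1"
  shows "K (x + of_int m) = K x + of_int m"
proof (induction m arbitrary: x rule: int_induct[where k = 0])
  case base
  then show ?case by simp
next
  case (step1 i)
  then show ?case using assms[of "x + of_int i"] by (simp add: add.assoc)
next
  case (step2 i)
  then show ?case using assms[of "x + of_int (i - 1)"] by (simp add: add.assoc)
qed

lemma frac_unit_periodic_frac:
  fixes K :: "real \<Rightarrow> real"
  assumes "\<And>x. K (x + 1) = K x + 1"
  shows "frac (K (frac y)) = frac (K y)"
proof -
  have "K (frac y) = K y + of_int (- \<lfloor>y\<rfloor>)"
    using unit_periodic_add_of_int[where K = K, OF assms, of y "- \<lfloor>y\<rfloor>"]
    by (simp add: frac_def)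
  then show ?thesis by (simp add: frac_def)
qed

lemma circle_lift_add_1: "circle_lift F \<Longrightarrow> F (x + 1) = F x + 1"
  by (simp add: circle_lift_def)

lemma circle_lift_add_of_int: "circle_lift F \<Longrightarrow> F (x + of_int m) = F x + of_int m"
  by (rule unit_periodic_add_of_int) (simp add: circle_lift_def)

lemma circle_lift_continuous_on: "circle_lift F \<Longrightarrow> continuous_on S F"
  unfolding circle_lift_def using continuous_on_subset by blast

lemma circle_lift_less_iff: "circle_lift F \<Longrightarrow> F x < F y \<longleftrightarrow> x < y"
  unfolding circle_lift_def using strict_mono_less by blast

lemma circle_lift_le_iff: "circle_lift F \<Longrightarrow> F x \<le> F y \<longleftrightarrow> x \<le> y"
  unfolding circle_lift_def using strict_mono_less_eq by blast

lemma circle_lift_compose: "circle_lift F \<Longrightarrow> circle_lift G \<Longrightarrow> circle_lift (F \<circ> G)"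
  unfolding circle_lift_def
  by (auto intro: continuous_on_compose2 strict_mono_o simp: strict_mono_def)

lemma circle_lift_funpow: "circle_lift F \<Longrightarrow> circle_lift (F ^^ n)"
proof (induction n)
  case 0
  show ?case by (simp add: circle_lift_def strict_mono_def)
next
  case (Suc n)
  then show ?case using circle_lift_compose[OF Suc.prems Suc.IH] by (simp add: comp_def)
qed

lemma circle_lift_diff_const: "circle_lift F \<Longrightarrow> circle_lift (\<lambda>x. F x - c)"
  unfolding circle_lift_def by (auto intro!: continuous_intros simp: strict_mono_def)

lemma circle_lift_reflect:
  assumes "circle_lift F"
  shows "circle_lift (\<lambda>x. - F (- x))"
proof -
  have "F (- x - 1) = F (- x) - 1" for x
    using circle_lift_add_1[OF assms, of "- x - 1"] by simp
  then show ?thesis using assms unfolding circle_lift_def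
    by (auto intro!: continuous_intros continuous_on_compose2[of UNIV F] simp: strict_mono_def)
qed

lemma funpow_reflect:
  fixes F :: "real \<Rightarrow> real"
  shows "((\<lambda>x. - F (- x)) ^^ n) x = - (F ^^ n) (- x)"
  by (induction n) (simp_all add: funpow.simps)

lemma circle_lift_displacement:
  assumes "circle_lift F"
  shows "\<bar>F x - x - F 0\<bar> < 1"
proof -
  have "F x = F (frac x) + of_int \<lfloor>x\<rfloor>"
    using circle_lift_add_of_int[OF assms, of "frac x" "\<lfloor>x\<rfloor>"] by (simp add: frac_def)
  moreover have "F 0 \<le> F (frac x)"
    using circle_lift_le_iff[OF assms] by simp
  moreover have "F (frac x) < F 0 + 1"
    using circle_lift_less_iff[OF assms, of "frac x" 1] circle_lift_add_1[OF assms, of 0]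
    by (simp add: frac_lt_1)
  ultimately show ?thesis using frac_ge_0[of x] frac_lt_1[of x] unfolding frac_def by linarith
qed

subsection \<open>The circle metric\<close>

lemma circ_dist_le: "circ_dist x y \<le> \<bar>x - y - of_int m\<bar>"
  unfolding circ_dist_def by (rule round_diff_minimal)

lemma circ_dist_le_abs: "circ_dist x y \<le> \<bar>x - y\<bar>"
  using circ_dist_le[of x y 0] by simp

lemma circ_dist_commute: "circ_dist x y = circ_dist y x"
  using circ_dist_le[of y x "- round (x - y)"] circ_dist_le[of x y "- round (y - x)"]
  unfolding circ_dist_def by (simp add: abs_minus_commute algebra_simps)

lemma circ_dist_add_of_int: "circ_dist (x + of_int m) y = circ_dist x y"
  using circ_dist_le[of "x + of_int m" y "round (x - y) + m"]
    circ_dist_le[of x y "round (x + of_int m - y) - m"]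
  unfolding circ_dist_def by (simp add: algebra_simps)

lemma circ_dist_add_of_int_right: "circ_dist x (y + of_int m) = circ_dist x y"
  using circ_dist_add_of_int circ_dist_commute by metis

lemma circ_dist_frac: "circ_dist (frac x) (frac y) = circ_dist x y"
  by (metis circ_dist_add_of_int circ_dist_add_of_int_right diff_conv_add_uminus frac_def
      of_int_minus)

lemma circ_dist_minus: "circ_dist (- x) (- y) = circ_dist x y"
  using circ_dist_commute[of x y] unfolding circ_dist_def by simp

lemma circ_dist_triangle: "circ_dist x z \<le> circ_dist x y + circ_dist y z"
proof -
  have "circ_dist x z \<le> \<bar>x - z - of_int (round (x - y) + round (y - z))\<bar>"
    by (rule circ_dist_le)
  also have "\<dots> \<le> circ_dist x y + circ_dist y z"
    unfolding circ_dist_def by simp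
  finally show ?thesis .
qed

lemma circ_dist_ge_min:
  assumes "s \<le> x - y" "x - y \<le> t" "0 < s" "t < 1"
  shows "min s (1 - t) \<le> circ_dist x y"
proof (cases "round (x - y) \<le> 0")
  case True
  then have "real_of_int (round (x - y)) \<le> 0" by simp
  then show ?thesis using assms unfolding circ_dist_def by (simp add: abs_if min_def)
next
  case False
  then have "real_of_int (round (x - y)) \<ge> 1" by simp
  then show ?thesis using assms unfolding circ_dist_def by (simp add: abs_if min_def)
qed

lemma circ_map_funpow_frac:
  assumes "circle_lift F"
  shows "(circ_map F ^^ k) (frac x) = frac ((F ^^ k) x)"
proof (induction k)
  case (Suc k)
  then show ?case
    using frac_unit_periodic_frac[of F "(F ^^ k) x"] circle_lift_add_1[OF assms]
    by (simp add: circ_map_def)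
qed simp

lemma circ_dist_circ_map_funpow:
  assumes "circle_lift F"
  shows "circ_dist ((circ_map F ^^ k) (frac x)) ((circ_map F ^^ k) (frac y))
    = circ_dist ((F ^^ k) x) ((F ^^ k) y)"
  by (simp add: circ_map_funpow_frac[OF assms] circ_dist_frac)

subsection \<open>Rotation number\<close>

lemma circle_lift_funpow_add_0:
  assumes "circle_lift F"
  shows "\<bar>(F ^^ (m + n)) 0 - (F ^^ m) 0 - (F ^^ n) 0\<bar> < 1"
  using circle_lift_displacement[OF circle_lift_funpow[OF assms, of m], of "(F ^^ n) 0"]
  by (simp add: funpow_add)

lemma circle_lift_funpow_mult_0:
  assumes "circle_lift F"
  shows "\<bar>(F ^^ (k * m)) 0 - real k * (F ^^ m) 0\<bar> \<le> real k"
proof (induction k)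
  case (Suc k)
  have "\<bar>(F ^^ (m + k * m)) 0 - (F ^^ m) 0 - (F ^^ (k * m)) 0\<bar> < 1"
    by (rule circle_lift_funpow_add_0[OF assms])
  with Suc show ?case by (simp add: algebra_simps abs_le_iff abs_less_iff)
qed simp

lemma circle_lift_funpow_mult_ratio:
  assumes "circle_lift F" "k > 0" "m > 0"
  shows "\<bar>(F ^^ (k * m)) 0 / (real k * real m) - (F ^^ m) 0 / real m\<bar> \<le> 1 / real m"
proof -
  have "\<bar>(F ^^ (k * m)) 0 / (real k * real m) - (F ^^ m) 0 / real m\<bar>
      = \<bar>(F ^^ (k * m)) 0 - real k * (F ^^ m) 0\<bar> / (real k * real m)"
    using assms by (simp add: field_simps abs_divide)
  also have "\<dots> \<le> real k / (real k * real m)"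
    by (rule divide_right_mono[OF circle_lift_funpow_mult_0[OF assms(1)]]) simp
  also have "\<dots> = 1 / real m"
    using assms by simp
  finally show ?thesis .
qed

lemma circle_lift_funpow_ratio_diff:
  assumes "circle_lift F" "m > 0" "n > 0"
  shows "\<bar>(F ^^ m) 0 / real m - (F ^^ n) 0 / real n\<bar> \<le> 1 / real m + 1 / real n"
  using circle_lift_funpow_mult_ratio[OF assms(1,3,2)] circle_lift_funpow_mult_ratio[OF assms]
  by (simp add: mult.commute abs_le_iff)

lemma rot_num_LIMSEQ:
  assumes "circle_lift F"
  shows "(\<lambda>n. (F ^^ n) 0 / real n) \<longlonglongrightarrow> rot_num F"
proof -
  have "Cauchy (\<lambda>n. (F ^^ n) 0 / real n)"
  proof (rule metric_CauchyI)
    fix e :: real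
    assume "e > 0"
    obtain k where "inverse (real (Suc k)) < e / 2"
      using reals_Archimedean[of "e / 2"] \<open>e > 0\<close> by auto
    define M where "M = Suc k"
    have "M > 0" "2 / real M < e"
      unfolding M_def using \<open>inverse (real (Suc k)) < e / 2\<close>
      by (simp_all add: inverse_eq_divide field_simps)
    have "dist ((F ^^ m) 0 / real m) ((F ^^ n) 0 / real n) < e" if "M \<le> m" "M \<le> n" for m n
    proof -
      have "dist ((F ^^ m) 0 / real m) ((F ^^ n) 0 / real n) \<le> 1 / real m + 1 / real n"
        unfolding dist_real_def using circle_lift_funpow_ratio_diff[OF assms] \<open>M > 0\<close> that
        by simp
      also have "\<dots> \<le> 2 / real M"
        using \<open>M > 0\<close> that frac_le[of 1 1 M m] frac_le[of 1 1 M n] by simp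
      finally show ?thesis using \<open>2 / real M < e\<close> by simp
    qed
    then show "\<exists>M. \<forall>m\<ge>M. \<forall>n\<ge>M. dist ((F ^^ m) 0 / real m) ((F ^^ n) 0 / real n) < e"
      by blast
  qed
  then show ?thesis
    unfolding rot_num_def by (simp add: Cauchy_convergent_iff convergent_LIMSEQ_iff)
qed

lemma rot_num_approx:
  assumes "circle_lift F" "m > 0"
  shows "\<bar>rot_num F - (F ^^ m) 0 / real m\<bar> \<le> 1 / real m"
proof -
  have "\<bar>rot_num F - (F ^^ m) 0 / real m\<bar> \<le> 1 / real m + 0"
  proof (rule tendsto_le[OF trivial_limit_sequentially])
    show "(\<lambda>n. \<bar>(F ^^ n) 0 / real n - (F ^^ m) 0 / real m\<bar>)
        \<longlonglongrightarrow> \<bar>rot_num F - (F ^^ m) 0 / real m\<bar>"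
      by (intro tendsto_intros rot_num_LIMSEQ[OF assms(1)])
    show "(\<lambda>n. 1 / real m + 1 / real n) \<longlonglongrightarrow> 1 / real m + 0"
      by (intro tendsto_intros lim_1_over_n)
    show "\<forall>\<^sub>F n in sequentially.
        \<bar>(F ^^ n) 0 / real n - (F ^^ m) 0 / real m\<bar> \<le> 1 / real m + 1 / real n"
      using eventually_gt_at_top[of 0]
      by eventually_elim
        (use circle_lift_funpow_ratio_diff[OF assms(1,2)] in \<open>simp add: abs_minus_commute\<close>)
  qed
  then show ?thesis by simp
qed

subsection \<open>Rational rotation number\<close>

lemma circle_lift_funpow_mult_shift:
  assumes "circle_lift F"
  shows "(F ^^ (q * k)) x = ((\<lambda>x. (F ^^ q) x - of_int p) ^^ k) x + of_int (int k * p)"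
proof (induction k)
  case (Suc k)
  have "(F ^^ (q * Suc k)) x = (F ^^ q) ((F ^^ (q * k)) x)"
    by (simp add: funpow_add)
  also have "\<dots> = (F ^^ q) (((\<lambda>x. (F ^^ q) x - of_int p) ^^ k) x) + of_int (int k * p)"
    unfolding Suc by (rule circle_lift_add_of_int[OF circle_lift_funpow[OF assms]])
  finally show ?case by (simp add: algebra_simps)
qed simp

lemma rot_num_rational_bounded_orbit:
  assumes "circle_lift F" "q > 0" "rot_num F = of_int p / real q"
  shows "\<bar>((\<lambda>x. (F ^^ q) x - of_int p) ^^ k) 0\<bar> \<le> 1"
proof (cases "k = 0")
  case False
  have qk: "real q * real k > 0"
    using assms(2) False by simp
  have "\<bar>of_int p / real q - (F ^^ (q * k)) 0 / (real q * real k)\<bar> \<le> 1 / (real q * real k)"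
    using rot_num_approx[OF assms(1), of "q * k"] assms(2,3) False by simp
  moreover have "of_int p / real q - (F ^^ (q * k)) 0 / (real q * real k)
      = (real k * of_int p - (F ^^ (q * k)) 0) / (real q * real k)"
    using assms(2) False by (simp add: field_simps)
  ultimately have "\<bar>real k * of_int p - (F ^^ (q * k)) 0\<bar> / (real q * real k) \<le> 1 / (real q * real k)"
    by (simp add: abs_divide)
  then have "\<bar>real k * of_int p - (F ^^ (q * k)) 0\<bar> \<le> 1"
    using qk by (simp add: divide_le_cancel)
  then show ?thesis
    using circle_lift_funpow_mult_shift[OF assms(1), of q k 0 p] by (simp add: abs_minus_commute)
qed simp

lemma funpow_ge_drift: "(\<And>x. x + d \<le> G x) \<Longrightarrow> x + real k * d \<le> (G ^^ k) x"
proof (induction k)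
  case (Suc k)
  then show ?case using Suc.prems[of "(G ^^ k) x"] by (simp add: algebra_simps)
qed simp

lemma funpow_le_drift: "(\<And>x. G x \<le> x + d) \<Longrightarrow> (G ^^ k) x \<le> x + real k * d"
proof (induction k)
  case (Suc k)
  then show ?case using Suc.prems[of "(G ^^ k) x"] by (simp add: algebra_simps)
qed simp

lemma circle_lift_fixed_point_free_drift:
  assumes G: "circle_lift G" and nofix: "\<And>x. G x \<noteq> x"
  shows "\<exists>d>0. (\<forall>x. x + d \<le> G x) \<or> (\<forall>x. G x \<le> x - d)"
proof -
  define D where "D x = G x - x" for x
  have D_cont: "continuous_on S D" for S
    unfolding D_def by (intro continuous_intros circle_lift_continuous_on[OF G])
  have D_frac: "D x = D (frac x)" for x
    using circle_lift_add_of_int[OF G, of "frac x" "\<lfloor>x\<rfloor>"] unfolding D_def frac_def by simp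
  have "continuous_on {0..1} (\<lambda>x. \<bar>D x\<bar>)"
    by (intro continuous_intros D_cont)
  then obtain x1 where x1_min: "\<forall>y\<in>{0..1}. \<bar>D x1\<bar> \<le> \<bar>D y\<bar>"
    using continuous_attains_inf[of "{0..1::real}"] by auto
  have min: "\<bar>D x1\<bar> \<le> \<bar>D x\<bar>" for x
    using x1_min[rule_format, of "frac x"] D_frac[of x] by (simp add: frac_lt_1 less_imp_le)
  have min_pos: "\<bar>D x1\<bar> > 0"
    using nofix[of x1] unfolding D_def by simp
  have "(\<forall>x. 0 < D x) \<or> (\<forall>x. D x < 0)"
  proof (rule ccontr)
    assume "\<not> ?thesis"
    then obtain x y where "\<not> 0 < D x" "\<not> D y < 0"
      by blast
    moreover have "D x \<noteq> 0" "D y \<noteq> 0"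
      using nofix unfolding D_def by auto
    ultimately have "D x < 0" "0 < D y"
      by auto
    moreover have "connected (range D)"
      by (rule connected_continuous_image[OF D_cont connected_UNIV])
    ultimately have "0 \<in> range D"
      using connected_contains_Icc[of "range D" "D x" "D y"] by fastforce
    then show False using nofix unfolding D_def by auto
  qed
  then show ?thesis
  proof
    assume "\<forall>x. 0 < D x"
    then have "x + \<bar>D x1\<bar> \<le> G x" for x
      using min[of x] abs_of_pos[of "D x"] unfolding D_def by auto
    with min_pos show ?thesis by blast
  next
    assume "\<forall>x. D x < 0"
    then have "G x \<le> x - \<bar>D x1\<bar>" for x
      using min[of x] abs_of_neg[of "D x"] unfolding D_def by auto
    with min_pos show ?thesis by blast
  qed
qed

lemma circle_lift_bounded_orbit_fixed_point:
  assumes G: "circle_lift G" and bounded: "\<And>k. \<bar>(G ^^ k) 0\<bar> \<le> B"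
  shows "\<exists>x. G x = x"
proof (rule ccontr)
  assume "\<not> ?thesis"
  then obtain d where "d > 0" and drift: "(\<forall>x. x + d \<le> G x) \<or> (\<forall>x. G x \<le> x - d)"
    using circle_lift_fixed_point_free_drift[OF G] by blast
  obtain k :: nat where "B / d < real k"
    using reals_Archimedean2 by blast
  with \<open>d > 0\<close> have "B < real k * d"
    by (simp add: pos_divide_less_eq)
  moreover have "real k * d \<le> \<bar>(G ^^ k) 0\<bar>"
    using drift funpow_ge_drift[of d G 0 k] funpow_le_drift[of G "- d" k 0] by auto
  ultimately show False
    using bounded[of k] by simp
qed

lemma rational_rot_num_fixed_point:
  assumes "circle_lift F" "q > 0" "rot_num F = of_int p / real q"
  shows "\<exists>x. (F ^^ q) x - of_int p = x"
  by (rule circle_lift_bounded_orbit_fixed_point[OF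
        circle_lift_diff_const[OF circle_lift_funpow[OF assms(1)]]
        rot_num_rational_bounded_orbit[OF assms]])

subsection \<open>Covers by Bowen balls\<close>

definition bowen_cover :: "(real \<Rightarrow> real) \<Rightarrow> nat \<Rightarrow> real \<Rightarrow> real set \<Rightarrow> bool" where
  "bowen_cover F n eps C \<longleftrightarrow>
     finite C \<and> C \<subseteq> circle \<and> (\<forall>x\<in>circle. \<exists>c\<in>C. bowen_dist F n x c < eps)"

lemma bowen_dist_less:
  assumes "n > 0" "\<And>k. k < n \<Longrightarrow> circ_dist ((circ_map F ^^ k) x) ((circ_map F ^^ k) y) < e"
  shows "bowen_dist F n x y < e"
proof -
  have "{circ_dist ((circ_map F ^^ k) x) ((circ_map F ^^ k) y) | k. k < n}
      = (\<lambda>k. circ_dist ((circ_map F ^^ k) x) ((circ_map F ^^ k) y)) ` {..<n}"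
    by auto
  then show ?thesis
    unfolding bowen_dist_def using assms by (subst Max_less_iff) auto
qed

lemma circ_dist_le_bowen_dist:
  assumes "k < n"
  shows "circ_dist ((circ_map F ^^ k) x) ((circ_map F ^^ k) y) \<le> bowen_dist F n x y"
proof -
  have "{circ_dist ((circ_map F ^^ k) x) ((circ_map F ^^ k) y) | k. k < n}
      = (\<lambda>k. circ_dist ((circ_map F ^^ k) x) ((circ_map F ^^ k) y)) ` {..<n}"
    by auto
  then show ?thesis
    unfolding bowen_dist_def using assms by (intro Max_ge) auto
qed

lemma cover_num_le_card: "bowen_cover F n eps C \<Longrightarrow> cover_num F n eps \<le> card C"
  unfolding cover_num_def bowen_cover_def by (rule cInf_lower) auto

lemma card_le_cover_num_if_separated:
  assumes cover: "bowen_cover F n eps C"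
    and points: "\<And>i. i < m \<Longrightarrow> v i \<in> circle"
    and separated: "\<And>i j. i < m \<Longrightarrow> j < m \<Longrightarrow> i \<noteq> j \<Longrightarrow>
        \<exists>k<n. 2 * eps \<le> circ_dist ((circ_map F ^^ k) (v i)) ((circ_map F ^^ k) (v j))"
  shows "m \<le> cover_num F n eps"
  unfolding cover_num_def
proof (rule cInf_greatest)
  show "{card C |C. finite C \<and> C \<subseteq> circle \<and> (\<forall>x\<in>circle. \<exists>c\<in>C. bowen_dist F n x c < eps)} \<noteq> {}"
    using cover unfolding bowen_cover_def by blast
  fix z
  assume "z \<in> {card C |C. finite C \<and> C \<subseteq> circle \<and> (\<forall>x\<in>circle. \<exists>c\<in>C. bowen_dist F n x c < eps)}"
  then obtain D where z: "z = card D" and D: "bowen_cover F n eps D"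
    unfolding bowen_cover_def by blast
  have "\<forall>i. \<exists>c. i < m \<longrightarrow> c \<in> D \<and> bowen_dist F n (v i) c < eps"
    using points D unfolding bowen_cover_def by blast
  then obtain g where g: "\<And>i. i < m \<Longrightarrow> g i \<in> D \<and> bowen_dist F n (v i) (g i) < eps"
    by metis
  have "inj_on g {..<m}"
  proof (rule inj_onI, rule ccontr)
    fix i j
    assume ij: "i \<in> {..<m}" "j \<in> {..<m}" "g i = g j" "i \<noteq> j"
    then obtain k where "k < n"
      and far: "2 * eps \<le> circ_dist ((circ_map F ^^ k) (v i)) ((circ_map F ^^ k) (v j))"
      using separated by blast
    have "circ_dist ((circ_map F ^^ k) (v i)) ((circ_map F ^^ k) (g i)) < eps"
      "circ_dist ((circ_map F ^^ k) (v j)) ((circ_map F ^^ k) (g i)) < eps"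
      using circ_dist_le_bowen_dist[OF \<open>k < n\<close>] g ij by (metis lessThan_iff order.strict_trans1)+
    then show False
      using far circ_dist_triangle[of "(circ_map F ^^ k) (v i)" "(circ_map F ^^ k) (v j)"
          "(circ_map F ^^ k) (g i)"]
        circ_dist_commute[of "(circ_map F ^^ k) (g i)" "(circ_map F ^^ k) (v j)"] by linarith
  qed
  then have "card {..<m} \<le> card D"
    using g D unfolding bowen_cover_def by (intro card_inj_on_le) auto
  then show "m \<le> z"
    using z by simp
qed

subsection \<open>At most linear growth of the covering numbers\<close>

definition grid_preimage :: "(real \<Rightarrow> real) \<Rightarrow> nat \<Rightarrow> real set" where
  "grid_preimage H N = {x \<in> circle. \<exists>j::int. H x = of_int j / real N}"

lemma card_grid_preimage:
  assumes H: "circle_lift H" and "N > 0"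
  shows "finite (grid_preimage H N)" "card (grid_preimage H N) \<le> N"
proof -
  define a where "a = \<lceil>real N * H 0\<rceil>"
  define index where "index x = \<lfloor>real N * H x\<rfloor>" for x
  have H_eq: "H x = of_int (index x) / real N" if "x \<in> grid_preimage H N" for x
    using that \<open>N > 0\<close> unfolding grid_preimage_def index_def by auto
  have "inj_on index (grid_preimage H N)"
  proof (rule inj_onI)
    fix x y
    assume "x \<in> grid_preimage H N" "y \<in> grid_preimage H N" "index x = index y"
    then have "H x = H y"
      using H_eq by metis
    then show "x = y"
      using H unfolding circle_lift_def by (simp add: strict_mono_eq)
  qed
  moreover have "index ` grid_preimage H N \<subseteq> {a..<a + int N}"
  proof
    fix j
    assume "j \<in> index ` grid_preimage H N"
    then obtain x where x: "x \<in> grid_preimage H N" "j = index x"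
      by blast
    have "H 0 \<le> H x" "H x < H 0 + 1"
      using x(1) circle_lift_le_iff[OF H] circle_lift_less_iff[OF H, of x 1]
        circle_lift_add_1[OF H, of 0] unfolding grid_preimage_def circle_def by auto
    then have "real N * H 0 \<le> of_int j" "of_int j < real N * H 0 + real N"
      using H_eq[OF x(1)] x(2) \<open>N > 0\<close> by (auto simp: field_simps)
    then show "j \<in> {a..<a + int N}"
      unfolding a_def by (auto simp: ceiling_le_iff) linarith
  qed
  ultimately show "finite (grid_preimage H N)" "card (grid_preimage H N) \<le> N"
    using finite_imageD[OF finite_subset] card_inj_on_le[of index _ "{a..<a + int N}"]
    by fastforce+
qed

lemma circle_lift_diff_less_if_no_grid_preimage:
  assumes H: "circle_lift H" and "N > 0" and "s \<le> x"
    and gap: "\<And>t j. s < t \<Longrightarrow> t \<le> x \<Longrightarrow> H t \<noteq> of_int j / real N"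
  shows "H x - H s < 1 / real N"
proof (rule ccontr)
  assume "\<not> ?thesis"
  define g where "g = of_int \<lfloor>real N * H x\<rfloor> / real N"
  have "g \<le> H x" "H x < g + 1 / real N"
    unfolding g_def using \<open>N > 0\<close> by (auto simp: field_simps) linarith+
  with \<open>\<not> ?thesis\<close> have "H s < g" "g \<le> H x"
    by linarith+
  then obtain t where "s \<le> t" "t \<le> x" "H t = g"
    using IVT'[of H s g x] \<open>s \<le> x\<close> circle_lift_continuous_on[OF H] by auto
  moreover from this have "s < t"
    using \<open>H s < g\<close> by (cases "s = t") auto
  ultimately show False
    using gap unfolding g_def by blast
qed

lemma bowen_cover_grid_preimages:
  assumes F: "circle_lift F" and "n > 0" "N > 0" "1 / real N < eps"
  shows "bowen_cover F n eps (insert 0 (\<Union>k<n. grid_preimage (F ^^ k) N))"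
    (is "bowen_cover F n eps ?S")
proof -
  have "finite ?S"
    using card_grid_preimage(1)[OF circle_lift_funpow[OF F] \<open>N > 0\<close>] by simp
  moreover have "?S \<subseteq> circle"
    unfolding grid_preimage_def circle_def by auto
  moreover have "\<exists>c\<in>?S. bowen_dist F n x c < eps" if x: "x \<in> circle" for x
  proof -
    define s where "s = Max {t \<in> ?S. t \<le> x}"
    have fin: "finite {t \<in> ?S. t \<le> x}"
      using \<open>finite ?S\<close> by simp
    have "0 \<in> {t \<in> ?S. t \<le> x}"
      using x unfolding circle_def by simp
    then have "s \<in> {t \<in> ?S. t \<le> x}"
      unfolding s_def using Max_in[OF fin] by blast
    then have "s \<in> ?S" "s \<le> x"
      by blast+
    have s_max: "t \<le> s" if "t \<in> ?S" "t \<le> x" for t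
      using Max_ge[OF fin] that unfolding s_def by blast
    have "s \<in> circle"
      using \<open>s \<in> ?S\<close> \<open>?S \<subseteq> circle\<close> by blast
    have "circ_dist ((circ_map F ^^ k) x) ((circ_map F ^^ k) s) < eps" if "k < n" for k
    proof -
      have "t \<notin> grid_preimage (F ^^ k) N" if "s < t" "t \<le> x" for t
        using s_max[of t] that \<open>k < n\<close> by fastforce
      then have gap: "(F ^^ k) t \<noteq> of_int j / real N" if "s < t" "t \<le> x" for t j
        using that \<open>s \<in> circle\<close> x unfolding grid_preimage_def circle_def by auto
      have "circ_dist ((circ_map F ^^ k) x) ((circ_map F ^^ k) s)
          = circ_dist ((F ^^ k) x) ((F ^^ k) s)"
        using circ_dist_circ_map_funpow[OF F, of k x s] x \<open>s \<in> circle\<close>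
        unfolding circle_def by (simp add: frac_eq)
      also have "\<dots> \<le> (F ^^ k) x - (F ^^ k) s"
        using circ_dist_le_abs circle_lift_le_iff[OF circle_lift_funpow[OF F]] \<open>s \<le> x\<close>
        by (metis abs_of_nonneg diff_ge_0_iff_ge)
      also have "\<dots> < 1 / real N"
        by (rule circle_lift_diff_less_if_no_grid_preimage[OF circle_lift_funpow[OF F]
              \<open>N > 0\<close> \<open>s \<le> x\<close> gap])
      finally show ?thesis
        using \<open>1 / real N < eps\<close> by simp
    qed
    then show ?thesis
      using \<open>s \<in> ?S\<close> bowen_dist_less[OF \<open>n > 0\<close>] by blast
  qed
  ultimately show ?thesis
    unfolding bowen_cover_def by blast
qed

lemma card_grid_preimages:
  assumes F: "circle_lift F" and "N > 0"
  shows "card (insert 0 (\<Union>k<n. grid_preimage (F ^^ k) N)) \<le> n * N + 1"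
proof -
  have "card (\<Union>k<n. grid_preimage (F ^^ k) N) \<le> (\<Sum>k<n. card (grid_preimage (F ^^ k) N))"
    by (rule card_UN_le) simp
  also have "\<dots> \<le> n * N"
    using sum_mono[of "{..<n}" "\<lambda>k. card (grid_preimage (F ^^ k) N)" "\<lambda>_. N"]
      card_grid_preimage(2)[OF circle_lift_funpow[OF F] \<open>N > 0\<close>] by simp
  finally show ?thesis
    by (intro card_insert_le_m1) simp_all
qed

subsection \<open>Separated orbits and at least linear growth of the covering numbers\<close>

lemma circle_lift_separated_orbits_up:
  assumes G: "circle_lift G" and "G a = a" "a < c" "c < a + 1" "c < G c"
  shows "\<exists>\<sigma>>0. \<exists>u. \<forall>i j. i < j \<longrightarrow> \<sigma> \<le> circ_dist ((G ^^ i) (u i)) ((G ^^ i) (u j))"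
proof -
  have mono_G: "mono (G ^^ i)" for i
    using circle_lift_funpow[OF G] unfolding circle_lift_def by (simp add: strict_mono_mono)
  have fixed: "(G ^^ i) a = a" for i
    by (induction i) (simp_all add: \<open>G a = a\<close>)
  have c_le: "c \<le> (G ^^ i) c" for i
  proof (induction i)
    case (Suc i)
    have "G c \<le> G ((G ^^ i) c)"
      using Suc circle_lift_le_iff[OF G] by blast
    then show ?case using \<open>c < G c\<close> by simp
  qed simp
  have "\<exists>x. a \<le> x \<and> x \<le> c \<and> (G ^^ i) x = c" for i
    using IVT'[of "G ^^ i" a c c] fixed c_le[of i] \<open>a < c\<close>
      circle_lift_continuous_on[OF circle_lift_funpow[OF G]] by auto
  then obtain u where u: "\<And>i. a \<le> u i" "\<And>i. (G ^^ i) (u i) = c"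
    by metis
  obtain w where "a \<le> w" "w \<le> c" "G w = c"
    using IVT'[of G a c c] \<open>G a = a\<close> \<open>c < G c\<close> \<open>a < c\<close> circle_lift_continuous_on[OF G] by auto
  with \<open>c < G c\<close> have "w < c"
    by (metis order_le_less)
  define \<sigma> where "\<sigma> = min (c - w) (1 - (c - a))"
  have "\<sigma> \<le> circ_dist ((G ^^ i) (u i)) ((G ^^ i) (u j))" if "i < j" for i j
  proof -
    txt \<open>\<open>G\<^sup>i (u\<^sub>j)\<close> still needs further steps to reach \<open>c\<close>, so it lies in \<open>[a, w]\<close>, where
      \<open>G w = c\<close>; meanwhile \<open>G\<^sup>i (u\<^sub>i) = c\<close>.\<close>
    define y where "y = (G ^^ i) (u j)"
    obtain d where "j = d + Suc i"
      using less_imp_Suc_add[OF \<open>i < j\<close>] by auto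
    then have "(G ^^ d) (G y) = c"
      using u(2)[of j] unfolding y_def by (simp only: funpow_add comp_apply funpow.simps(2))
    then have "G y \<le> c"
      using c_le[of d] circle_lift_le_iff[OF circle_lift_funpow[OF G]] by metis
    then have "y \<le> w"
      using \<open>G w = c\<close> circle_lift_le_iff[OF G] by metis
    moreover have "a \<le> y"
      using monoD[OF mono_G u(1)[of j]] fixed unfolding y_def by metis
    ultimately have "min (c - w) (1 - (c - a)) \<le> circ_dist c y"
      using \<open>w < c\<close> \<open>c < a + 1\<close> by (intro circ_dist_ge_min) auto
    then show ?thesis
      unfolding \<sigma>_def y_def using u(2) by simp
  qed
  moreover have "\<sigma> > 0"
    unfolding \<sigma>_def using \<open>w < c\<close> \<open>c < a + 1\<close> by simp
  ultimately show ?thesis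
    by blast
qed

text \<open>The case of a point moving down reduces to the previous one by the reflection
  \<open>x \<mapsto> -x\<close>, which maps the fixed point \<open>a + 1\<close> of \<open>G\<close> to a fixed point below \<open>-c\<close>.\<close>

lemma circle_lift_separated_orbits_between:
  assumes G: "circle_lift G" and "G a = a" "a < c" "c < a + 1" "G c \<noteq> c"
  shows "\<exists>\<sigma>>0. \<exists>u. \<forall>i j. i < j \<longrightarrow> \<sigma> \<le> circ_dist ((G ^^ i) (u i)) ((G ^^ i) (u j))"
proof (cases "c < G c")
  case True
  then show ?thesis
    using circle_lift_separated_orbits_up[OF assms(1-4)] by blast
next
  case False
  define R where "R = (\<lambda>x. - G (- x))"
  have R: "circle_lift R"
    unfolding R_def by (rule circle_lift_reflect[OF G])
  have R_fixed: "R (- a - 1) = - a - 1"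
    using circle_lift_add_1[OF G, of a] \<open>G a = a\<close> unfolding R_def by (simp add: add.commute)
  have R_up: "- c < R (- c)"
    using False \<open>G c \<noteq> c\<close> unfolding R_def by simp
  have "- a - 1 < - c" "- c < - a - 1 + 1"
    using \<open>a < c\<close> \<open>c < a + 1\<close> by simp_all
  from circle_lift_separated_orbits_up[OF R R_fixed this R_up]
  obtain \<sigma> u where "\<sigma> > 0"
    and sep: "\<And>i j. i < j \<Longrightarrow> \<sigma> \<le> circ_dist ((R ^^ i) (u i)) ((R ^^ i) (u j))"
    by blast
  have G_pow: "(G ^^ i) (- x) = - (R ^^ i) x" for i x
    using funpow_reflect[where F = G] unfolding R_def by simp
  have "\<forall>i j. i < j \<longrightarrow> \<sigma> \<le> circ_dist ((G ^^ i) (- u i)) ((G ^^ i) (- u j))"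
    using sep by (simp add: G_pow circ_dist_minus)
  then have "\<exists>u. \<forall>i j. i < j \<longrightarrow> \<sigma> \<le> circ_dist ((G ^^ i) (u i)) ((G ^^ i) (u j))"
    by (rule exI[of _ "\<lambda>i. - u i"])
  with \<open>\<sigma> > 0\<close> show ?thesis
    by blast
qed

lemma circle_lift_separated_orbits:
  assumes G: "circle_lift G" and "G a = a" "G y \<noteq> y"
  shows "\<exists>\<sigma>>0. \<exists>u. \<forall>i j. i < j \<longrightarrow> \<sigma> \<le> circ_dist ((G ^^ i) (u i)) ((G ^^ i) (u j))"
proof -
  define c where "c = y - of_int \<lfloor>y - a\<rfloor>"
  have "G c - c = G y - y"
    using circle_lift_add_of_int[OF G, of y "- \<lfloor>y - a\<rfloor>"] unfolding c_def by simp
  then have "G c \<noteq> c"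
    using \<open>G y \<noteq> y\<close> by linarith
  moreover have "a \<le> c" "c < a + 1"
    unfolding c_def by linarith+
  moreover have "c \<noteq> a"
    using \<open>G a = a\<close> \<open>G c \<noteq> c\<close> by blast
  ultimately show ?thesis
    by (intro circle_lift_separated_orbits_between[OF G \<open>G a = a\<close>]) auto
qed

lemma cover_num_ge_if_separated_orbits:
  assumes F: "circle_lift F" and "q > 0" "n > 0" and cover: "bowen_cover F n eps C"
    and separated: "\<And>i j. i < j \<Longrightarrow> 2 * eps \<le>
      circ_dist (((\<lambda>x. (F ^^ q) x - of_int p) ^^ i) (u i)) (((\<lambda>x. (F ^^ q) x - of_int p) ^^ i) (u j))"
  shows "real n / real q \<le> real (cover_num F n eps)"
proof -
  let ?G = "\<lambda>x. (F ^^ q) x - of_int p"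
  define m where "m = (n - 1) div q + 1"
  have "q * ((n - 1) div q) + (n - 1) mod q = n - 1" "(n - 1) mod q < q"
    using \<open>q > 0\<close> by simp_all
  moreover have "q * m = q * ((n - 1) div q) + q"
    unfolding m_def by simp
  ultimately have "n \<le> q * m"
    using \<open>n > 0\<close> by linarith
  then have "real n \<le> real q * real m"
    by (simp only: of_nat_mult[symmetric] of_nat_le_iff)
  have time: "q * i < n" if "i < m" for i
  proof -
    have "q * i \<le> q * ((n - 1) div q)"
      using that unfolding m_def by simp
    also have "\<dots> \<le> n - 1"
      by simp
    finally show ?thesis
      using \<open>n > 0\<close> by simp
  qed
  have dist_eq: "circ_dist ((circ_map F ^^ (q * i)) (frac (u i))) ((circ_map F ^^ (q * i)) (frac (u j)))
      = circ_dist ((?G ^^ i) (u i)) ((?G ^^ i) (u j))" for i j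
    by (simp only: circ_dist_circ_map_funpow[OF F] circle_lift_funpow_mult_shift[OF F, where p = p]
        circ_dist_add_of_int circ_dist_add_of_int_right)
  have "m \<le> cover_num F n eps"
  proof (rule card_le_cover_num_if_separated[OF cover])
    show "frac (u i) \<in> circle" for i
      unfolding circle_def by (simp add: frac_lt_1)
    fix i j
    assume "i < m" "j < m" "i \<noteq> j"
    show "\<exists>k<n. 2 * eps \<le> circ_dist ((circ_map F ^^ k) (frac (u i))) ((circ_map F ^^ k) (frac (u j)))"
    proof (cases "i < j")
      case True
      then show ?thesis
        using time[OF \<open>i < m\<close>] dist_eq[of i j] separated[of i j] by auto
    next
      case False
      with \<open>i \<noteq> j\<close> have "j < i"
        by simp
      then show ?thesis
        using time[OF \<open>j < m\<close>] dist_eq[of j i] separated[of j i] circ_dist_commute by auto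
    qed
  qed
  then have "real n \<le> real q * real (cover_num F n eps)"
    using \<open>real n \<le> real q * real m\<close> by (meson mult_left_mono of_nat_0_le_iff of_nat_le_iff order_trans)
  then show ?thesis
    using \<open>q > 0\<close> by (simp add: pos_divide_le_eq mult.commute)
qed

subsection \<open>Lifts conjugate to translations\<close>

lemma circ_continuous_frac_unit_periodic:
  fixes K :: "real \<Rightarrow> real"
  assumes cont: "\<And>x. isCont K x" and periodic: "\<And>x. K (x + 1) = K x + 1"
  shows "circ_continuous (\<lambda>x. frac (K x))"
  unfolding circ_continuous_def
proof (intro ballI allI impI)
  fix x e :: real
  assume "e > 0"
  then obtain d where "d > 0" and d: "\<And>y. \<bar>y - x\<bar> < d \<Longrightarrow> \<bar>K y - K x\<bar> < e"
    using cont[of x] unfolding continuous_at_eps_delta dist_real_def by blast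
  show "\<exists>d>0. \<forall>y\<in>circle. circ_dist x y < d \<longrightarrow> circ_dist (frac (K x)) (frac (K y)) < e"
  proof (intro exI conjI ballI impI)
    fix y
    assume "circ_dist x y < d"
    define m where "m = round (x - y)"
    have "\<bar>(y + of_int m) - x\<bar> < d"
      using \<open>circ_dist x y < d\<close> unfolding circ_dist_def m_def by (simp add: abs_minus_commute)
    then have "\<bar>K (y + of_int m) - K x\<bar> < e"
      by (rule d)
    then have "\<bar>K y + of_int m - K x\<bar> < e"
      by (simp only: unit_periodic_add_of_int[where K = K, OF periodic])
    moreover have "circ_dist (frac (K x)) (frac (K y)) \<le> \<bar>K x - K y - of_int m\<bar>"
      unfolding circ_dist_frac by (rule circ_dist_le)
    ultimately show "circ_dist (frac (K x)) (frac (K y)) < e"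
      by (simp add: abs_minus_commute algebra_simps)
  qed (rule \<open>d > 0\<close>)
qed

lemma conj_to_rotation_if_lift_conjugacy:
  assumes H: "circle_lift H" and conj: "\<And>x. H (F x) = H x + r"
  shows "conj_to_rotation F"
proof -
  have H_cont: "isCont H x" for x
    using circle_lift_continuous_on[OF H, of UNIV] continuous_on_eq_continuous_at by blast
  have H_periodic: "\<And>x. H (x + 1) = H x + 1"
    by (rule circle_lift_add_1[OF H])
  have "\<exists>x. H x = y" for y
  proof -
    define m where "m = \<lfloor>y - H 0\<rfloor>"
    have "H (of_int m) = H 0 + of_int m"
      using circle_lift_add_of_int[OF H, of 0 m] by simp
    then have "H (of_int m) \<le> y" "y \<le> H (of_int m + 1)"
      using H_periodic[of "of_int m"] unfolding m_def by linarith+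
    then show ?thesis
      using IVT'[of H "of_int m" y "of_int m + 1"] circle_lift_continuous_on[OF H] by auto
  qed
  then have "surj H"
    by (metis surjI)
  have "inj H"
    using H unfolding circle_lift_def by (simp add: strict_mono_imp_inj_on)
  define H' where "H' = inv H"
  have H'H: "H' (H x) = x" for x
    unfolding H'_def by (rule inv_f_f[OF \<open>inj H\<close>])
  have HH': "H (H' y) = y" for y
    unfolding H'_def by (rule surj_f_inv_f[OF \<open>surj H\<close>])
  have H'_periodic: "H' (y + 1) = H' y + 1" for y
  proof -
    have "H' (y + 1) = H' (H (H' y + 1))"
      using H_periodic[of "H' y"] HH' by simp
    also have "\<dots> = H' y + 1"
      by (rule H'H)
    finally show ?thesis .
  qed
  have H'_cont: "isCont H' y" for y
  proof -
    have "isCont H' (H (H' y))"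
      by (rule isCont_inverse_function[where d = 1]) (auto simp: H'H H_cont)
    then show ?thesis
      using HH' by simp
  qed
  define h where "h x = frac (H x)" for x
  define g where "g y = frac (H' y)" for y
  have "circ_homeomorphism h g"
    unfolding circ_homeomorphism_def
  proof (intro conjI ballI)
    show "h ` circle \<subseteq> circle" "g ` circle \<subseteq> circle"
      unfolding h_def g_def circle_def by (auto simp: frac_lt_1)
    show "g (h x) = x" if "x \<in> circle" for x
      using that frac_unit_periodic_frac[where K = H', OF H'_periodic, of "H x"]
      unfolding g_def h_def circle_def by (simp add: H'H frac_eq)
    show "h (g y) = y" if "y \<in> circle" for y
      using that frac_unit_periodic_frac[where K = H, OF H_periodic, of "H' y"]
      unfolding g_def h_def circle_def by (simp add: HH' frac_eq)
    show "circ_continuous h"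
      unfolding h_def by (rule circ_continuous_frac_unit_periodic[OF H_cont H_periodic])
    show "circ_continuous g"
      unfolding g_def by (rule circ_continuous_frac_unit_periodic[OF H'_cont H'_periodic])
  qed
  moreover have "h (circ_map F x) = rotation r (h x)" for x
  proof -
    have "h (circ_map F x) = frac (H (F x))"
      unfolding h_def circ_map_def by (rule frac_unit_periodic_frac[where K = H, OF H_periodic])
    also have "\<dots> = frac (frac (H x) + r)"
      unfolding conj by simp
    finally show ?thesis
      unfolding rotation_def h_def .
  qed
  ultimately show ?thesis
    unfolding conj_to_rotation_def by blast
qed

text \<open>If \<open>F\<^sup>q\<close> is the translation by \<open>p\<close>, then averaging \<open>F\<^sup>k\<close> over \<open>k < q\<close> gives a lift
  conjugating \<open>F\<close> to the translation by \<open>p / q\<close>.\<close>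

lemma conj_to_rotation_if_periodic:
  assumes F: "circle_lift F" and "q > 0" and periodic: "\<And>x. (F ^^ q) x = x + of_int p"
  shows "conj_to_rotation F"
proof (rule conj_to_rotation_if_lift_conjugacy)
  define H where "H x = (\<Sum>k<q. (F ^^ k) x) / real q" for x
  show "circle_lift H"
    unfolding circle_lift_def
  proof (intro conjI allI)
    show "continuous_on UNIV H"
      unfolding H_def using \<open>q > 0\<close>
      by (intro continuous_intros circle_lift_continuous_on[OF circle_lift_funpow[OF F]]) auto
    show "strict_mono H"
    proof (rule strict_monoI)
      fix x y :: real
      assume "x < y"
      then have "(\<Sum>k<q. (F ^^ k) x) < (\<Sum>k<q. (F ^^ k) y)"
        using \<open>q > 0\<close> circle_lift_less_iff[OF circle_lift_funpow[OF F]] by (intro sum_strict_mono) auto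
      then show "H x < H y"
        unfolding H_def using \<open>q > 0\<close> by (simp add: divide_strict_right_mono)
    qed
    show "H (x + 1) = H x + 1" for x
      unfolding H_def using \<open>q > 0\<close>
      by (simp add: circle_lift_add_1[OF circle_lift_funpow[OF F]] sum.distrib add_divide_distrib)
  qed
  show "H (F x) = H x + of_int p / real q" for x
  proof -
    have "(\<Sum>k<q. (F ^^ k) (F x)) = (\<Sum>k<Suc q. (F ^^ k) x) - x"
      by (simp only: sum.lessThan_Suc_shift funpow_Suc_right comp_def) simp
    also have "\<dots> = (\<Sum>k<q. (F ^^ k) x) + of_int p"
      using periodic[of x] by simp
    finally show ?thesis
      unfolding H_def using \<open>q > 0\<close> by (simp add: add_divide_distrib)
  qed
qed

subsection \<open>Polynomial entropy\<close>

lemma ln_ratio_tendsto_1: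
  fixes g :: "nat \<Rightarrow> real"
  assumes "a > 0" "b > 0"
    and bounds: "\<forall>\<^sub>F n in sequentially. a * real n \<le> g n \<and> g n \<le> b * real n"
  shows "(\<lambda>n. ln (g n) / ln (real n)) \<longlonglongrightarrow> 1"
proof (rule tendsto_sandwich)
  have ln_inf: "filterlim (\<lambda>n. ln (real n)) at_infinity sequentially"
    by (intro filterlim_at_top_imp_at_infinity filterlim_compose[OF ln_at_top]
        filterlim_real_sequentially)
  have lim: "(\<lambda>n. 1 + c / ln (real n)) \<longlonglongrightarrow> 1" for c
    using tendsto_add[OF tendsto_const tendsto_divide_0[OF tendsto_const ln_inf]] by simp
  show "(\<lambda>n. 1 + ln a / ln (real n)) \<longlonglongrightarrow> 1" "(\<lambda>n. 1 + ln b / ln (real n)) \<longlonglongrightarrow> 1"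
    by (rule lim)+
  have ln_linear: "ln (c * real n) / ln (real n) = 1 + ln c / ln (real n)" if "c > 0" "n \<ge> 2" for c n
    using that by (simp add: ln_mult add_divide_distrib)
  show "\<forall>\<^sub>F n in sequentially. 1 + ln a / ln (real n) \<le> ln (g n) / ln (real n)"
    using bounds eventually_ge_at_top[of 2]
  proof eventually_elim
    case (elim n)
    have "0 < a * real n"
      using \<open>a > 0\<close> elim(2) by simp
    with elim(1) have "ln (a * real n) \<le> ln (g n)"
      by simp
    then have "ln (a * real n) / ln (real n) \<le> ln (g n) / ln (real n)"
      using elim(2) by (simp add: divide_right_mono)
    then show ?case
      using ln_linear[OF \<open>a > 0\<close> elim(2)] by simp
  qed
  show "\<forall>\<^sub>F n in sequentially. ln (g n) / ln (real n) \<le> 1 + ln b / ln (real n)"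
    using bounds eventually_ge_at_top[of 2]
  proof eventually_elim
    case (elim n)
    have "0 < a * real n"
      using \<open>a > 0\<close> elim(2) by simp
    with elim(1) have "0 < g n"
      by linarith
    with elim(1) have "ln (g n) \<le> ln (b * real n)"
      by simp
    then have "ln (g n) / ln (real n) \<le> ln (b * real n) / ln (real n)"
      using elim(2) by (simp add: divide_right_mono)
    then show ?case
      using ln_linear[OF \<open>b > 0\<close> elim(2)] by simp
  qed
qed

lemma hpol_eps_eq_1:
  assumes "a > 0" "b > 0"
    and "\<forall>\<^sub>F n in sequentially. a * real n \<le> real (cover_num F n eps) \<and> real (cover_num F n eps) \<le> b * real n"
  shows "hpol_eps F eps = 1"
proof -
  have "(\<lambda>n. ereal (ln (real (cover_num F n eps)) / ln (real n))) \<longlonglongrightarrow> ereal 1"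
    using ln_ratio_tendsto_1[OF assms] by (simp only: lim_ereal)
  then show ?thesis
    unfolding hpol_eps_def one_ereal_def by (rule lim_imp_Limsup[OF trivial_limit_sequentially])
qed

lemma hpol_eps_eq_1_if_separated_orbits:
  assumes F: "circle_lift F" and "q > 0" "eps > 0"
    and separated: "\<And>i j. i < j \<Longrightarrow> 2 * eps \<le>
      circ_dist (((\<lambda>x. (F ^^ q) x - of_int p) ^^ i) (u i)) (((\<lambda>x. (F ^^ q) x - of_int p) ^^ i) (u j))"
  shows "hpol_eps F eps = 1"
proof -
  obtain k where "inverse (real (Suc k)) < eps"
    using reals_Archimedean[OF \<open>eps > 0\<close>] by blast
  define N where "N = Suc k"
  have "N > 0" "1 / real N < eps"
    unfolding N_def using \<open>inverse (real (Suc k)) < eps\<close> by (simp_all add: inverse_eq_divide)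
  have "\<forall>\<^sub>F n in sequentially. 1 / real q * real n \<le> real (cover_num F n eps)
      \<and> real (cover_num F n eps) \<le> real (N + 1) * real n"
    using eventually_gt_at_top[of 0]
  proof eventually_elim
    case (elim n)
    let ?C = "insert 0 (\<Union>k<n. grid_preimage (F ^^ k) N)"
    have cover: "bowen_cover F n eps ?C"
      by (rule bowen_cover_grid_preimages[OF F elim \<open>N > 0\<close> \<open>1 / real N < eps\<close>])
    have "cover_num F n eps \<le> n * N + 1"
      using cover_num_le_card[OF cover] card_grid_preimages[OF F \<open>N > 0\<close>, of n] by linarith
    also have "\<dots> \<le> (N + 1) * n"
      using elim by simp
    finally have "real (cover_num F n eps) \<le> real (N + 1) * real n"
      by (simp only: of_nat_mult[symmetric] of_nat_le_iff)
    moreover have "real n / real q \<le> real (cover_num F n eps)"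
      by (rule cover_num_ge_if_separated_orbits[OF F \<open>q > 0\<close> elim cover separated])
    ultimately show ?case
      by simp
  qed
  then show ?thesis
    by (rule hpol_eps_eq_1[rotated 2]) (use \<open>q > 0\<close> in simp_all)
qed

theorem proposition3p1:
  fixes F :: "real \<Rightarrow> real"
  assumes "circle_lift F"
    and "rot_num F \<in> \<rat>"
    and "\<not> conj_to_rotation F"
  shows "(hpol_eps F \<longlongrightarrow> (1 :: ereal)) (at_right 0)"
proof -
  obtain p :: int and q :: nat where "q > 0" and rho: "rot_num F = of_int p / real q"
    using Rats_cases'[OF assms(2)] by (metis of_int_of_nat_eq pos_int_cases)
  define G where "G = (\<lambda>x. (F ^^ q) x - of_int p)"
  have G: "circle_lift G"
    unfolding G_def by (rule circle_lift_diff_const[OF circle_lift_funpow[OF assms(1)]])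
  obtain a where "G a = a"
    using rational_rot_num_fixed_point[OF assms(1) \<open>q > 0\<close> rho] unfolding G_def by blast
  obtain y where "G y \<noteq> y"
    using conj_to_rotation_if_periodic[OF assms(1) \<open>q > 0\<close>, of p] assms(3) unfolding G_def
    by (metis diff_eq_eq)
  obtain \<sigma> u where "\<sigma> > 0" and separated: "\<And>i j. i < j \<Longrightarrow> \<sigma> \<le> circ_dist ((G ^^ i) (u i)) ((G ^^ i) (u j))"
    using circle_lift_separated_orbits[OF G \<open>G a = a\<close> \<open>G y \<noteq> y\<close>] by blast
  have "hpol_eps F eps = 1" if "0 < eps" "eps < \<sigma> / 2" for eps
  proof (rule hpol_eps_eq_1_if_separated_orbits[OF assms(1) \<open>q > 0\<close> \<open>0 < eps\<close>])
    show "2 * eps \<le> circ_dist (((\<lambda>x. (F ^^ q) x - of_int p) ^^ i) (u i))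
        (((\<lambda>x. (F ^^ q) x - of_int p) ^^ i) (u j))" if "i < j" for i j
      using separated[OF that] \<open>eps < \<sigma> / 2\<close> unfolding G_def by linarith
  qed
  then have "\<forall>\<^sub>F eps in at_right 0. hpol_eps F eps = 1"
    unfolding eventually_at_right_field using \<open>\<sigma> > 0\<close> by (intro exI[of _ "\<sigma> / 2"]) auto
  then show ?thesis
    by (rule tendsto_eventually)
qed

end
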